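(* Let $\mathcal R$ be an energy relation under energy constraint $E$ (of an ETP or a finite composition of such). Then the greatest fixpoint $\nu\mathcal R^{-1}$ of the map $I\mapsto\mathcal R^{-1}(I)$ on the complete lattice $(\mathcal I(E),\supseteq)$ exists, is a closed (possibly empty) interval, and $$\nu\mathcal R^{-1}=\bigcap_{i\in\mathbb N}(\mathcal R^{-1})^i(E).$$ Moreover, $\nu\mathcal R^{-1}$ is the largest subset $S\subseteq E$ such that for every $w_0\in S$ there is $w_1\in S$ with $\mathcal R(w_0,w_1)$. In particular, if $\mathcal R$ is the energy relation of a cycle $\mathcal C$ (an ETP, or concatenation of ETPs, starting and ending at the same macro-state), then $\nu\mathcal R^{-1}$ is exactly the set of initial energy levels $w_0\in E$ from which there is an infinite run iterating $\mathcal C$ forever that satisfies $E$.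
   Context: An energy timed automaton (ETA) is a tuple $\langle S,S_0,X,\mathrm{Inv},r,T\rangle$ with finite states $S$, initial states $S_0$, clocks $X$, invariants $\mathrm{Inv}(s)$ that are conjunctions of closed clock constraints $x\bowtie c$ ($\bowtie\in\{\le,\ge,=\}$, $c$ rational), rates $r\colon S\to\mathbb Q$, and transitions $(s,g,u,z,s')$ with closed guard $g$, update $u\in\mathbb Q$, reset set $z\subseteq X$. A run alternates delays $d\ge0$ in a state $s$ (clocks increase by $d$, invariant must hold, energy increases by $d\cdot r(s)$) and transitions (guard must hold, clocks in $z$ reset to $0$, energy increases by $u$). An energy constraint is a closed interval $E$ with rational bounds; a run satisfies $E$ if all its energy levels lie in $E$. $\mathcal I(E)$ is the set of closed subintervals of $E$ (including $\emptyset$). An energy timed path (ETP) from $s_0$ to $s_n$ is an ETA whose states $s_0,\dots,s_n$ are linked by exactly one transition from $s_i$ to $s_{i+1}$ each. Its energy relation $\mathcal R^E_{\mathcal P}(w_0,w_1)$ holds iff there is a finite run from $(s_0,\mathbf 0,w_0)$ to $(s_n,\mathbf 0,w_1)$ satisfying $E$; compositions of energy relations correspond to concatenating paths, and $\mathcal R^k$ is the $k$-fold composition. For $I\in\mathcal I(E)$, $\mathcal R^{-1}(I)=\{w_0\in E\mid \exists w_1\in I.\ \mathcal R(w_0,w_1)\}$. Iterating a cycle means concatenating runs of it, each starting and ending with all clocks equal to $0$, the final energy of one being the initial energy of the next. *)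

theory Defs
  imports Complex_Main
begin

datatype 'c constr = CLe 'c real | CGe 'c real | CEq 'c real

fun sat_atom :: "('c \<Rightarrow> real) \<Rightarrow> 'c constr \<Rightarrow> bool" where
  "sat_atom v (CLe x c) = (v x \<le> c)"
| "sat_atom v (CGe x c) = (v x \<ge> c)"
| "sat_atom v (CEq x c) = (v x = c)"

fun constr_const :: "'c constr \<Rightarrow> real" where
  "constr_const (CLe x c) = c"
| "constr_const (CGe x c) = c"
| "constr_const (CEq x c) = c"

definition sat :: "('c \<Rightarrow> real) \<Rightarrow> 'c constr list \<Rightarrow> bool" where
  "sat v g \<longleftrightarrow> (\<forall>a\<in>set g. sat_atom v a)"

definition rat_guard :: "'c constr list \<Rightarrow> bool" where
  "rat_guard g \<longleftrightarrow> (\<forall>a\<in>set g. constr_const a \<in> \<rat>)"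

text \<open>An energy timed path: states s_0,...,s_n (a list), invariants and rates of states,
  and exactly one transition (s_i, g, u, z, s_(i+1)) per i < n.  The clocks are the
  (finite) type 'c.\<close>
record ('s, 'c) etp =
  P_states :: "'s list"
  P_inv :: "'s \<Rightarrow> 'c constr list"
  P_rate :: "'s \<Rightarrow> real"
  P_trans :: "('s \<times> 'c constr list \<times> real \<times> 'c set \<times> 's) list"

definition wf_etp :: "('s, 'c) etp \<Rightarrow> bool" where
  "wf_etp p \<longleftrightarrow>
     length (P_states p) = Suc (length (P_trans p)) \<and>
     (\<forall>s\<in>set (P_states p). rat_guard (P_inv p s) \<and> P_rate p s \<in> \<rat>) \<and>
     (\<forall>i < length (P_trans p).
        (case P_trans p ! i of (s, g, u, z, s') \<Rightarrow>
           s = P_states p ! i \<and> s' = P_states p ! Suc i \<and> rat_guard g \<and> u \<in> \<rat>))"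

definition tr_guard :: "('s, 'c) etp \<Rightarrow> nat \<Rightarrow> 'c constr list" where
  "tr_guard p i = fst (snd (P_trans p ! i))"
definition tr_upd :: "('s, 'c) etp \<Rightarrow> nat \<Rightarrow> real" where
  "tr_upd p i = fst (snd (snd (P_trans p ! i)))"
definition tr_reset :: "('s, 'c) etp \<Rightarrow> nat \<Rightarrow> 'c set" where
  "tr_reset p i = fst (snd (snd (snd (P_trans p ! i))))"

text \<open>Energy relation R^E_P (w0, w1): there is a finite run from (s_0, 0, w0) to (s_n, 0, w1)
  all of whose energy levels lie in E.  In state s_i the run delays d_i \<ge> 0 (invariant
  holds and energy stays in E throughout the delay), then takes the i-th transition
  (guard holds, energy updated by u, clocks in z reset).  v i / e i are the clock
  valuation and energy on entering s_i.\<close>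
definition etp_rel :: "real set \<Rightarrow> ('s, 'c) etp \<Rightarrow> real \<Rightarrow> real \<Rightarrow> bool" where
  "etp_rel E p w0 w1 \<longleftrightarrow>
    (let n = length (P_trans p); st = P_states p in
     \<exists>(v :: nat \<Rightarrow> 'c \<Rightarrow> real) (e :: nat \<Rightarrow> real) (d :: nat \<Rightarrow> real).
       v 0 = (\<lambda>_. 0) \<and> e 0 = w0 \<and>
       (\<forall>i\<le>n. d i \<ge> 0 \<and>
          (\<forall>t\<in>{0..d i}. sat (\<lambda>x. v i x + t) (P_inv p (st ! i)) \<and>
                          e i + t * P_rate p (st ! i) \<in> E)) \<and>
       (\<forall>i<n. sat (\<lambda>x. v i x + d i) (tr_guard p i) \<and>
              e (Suc i) = e i + d i * P_rate p (st ! i) + tr_upd p i \<and>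
              e (Suc i) \<in> E \<and>
              v (Suc i) = (\<lambda>x. if x \<in> tr_reset p i then 0 else v i x + d i)) \<and>
       (\<lambda>x. v n x + d n) = (\<lambda>_. 0) \<and>
       w1 = e n + d n * P_rate p (st ! n))"

text \<open>Energy relation of the concatenation of a nonempty list of ETPs
  = composition of their energy relations.\<close>
fun erel_seq :: "real set \<Rightarrow> ('s, 'c) etp list \<Rightarrow> real \<Rightarrow> real \<Rightarrow> bool" where
  "erel_seq E [] = (\<lambda>_ _. False)"
| "erel_seq E [p] = etp_rel E p"
| "erel_seq E (p # q # ps) = (etp_rel E p OO erel_seq E (q # ps))"

definition is_cycle :: "('s, 'c) etp list \<Rightarrow> bool" where
  "is_cycle ps \<longleftrightarrow> ps \<noteq> [] \<and>
     (\<forall>j. Suc j < length ps \<longrightarrow> last (P_states (ps ! j)) = hd (P_states (ps ! Suc j))) \<and>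
     hd (P_states (hd ps)) = last (P_states (last ps))"

text \<open>I(E): closed subintervals of E (including the empty set).\<close>
definition closed_subints :: "real set \<Rightarrow> real set set" where
  "closed_subints E = {I. I \<subseteq> E \<and> (\<exists>c d. I = {c..d})}"

definition pre_rel :: "real set \<Rightarrow> (real \<Rightarrow> real \<Rightarrow> bool) \<Rightarrow> real set \<Rightarrow> real set" where
  "pre_rel E R I = {w0 \<in> E. \<exists>w1\<in>I. R w0 w1}"

end

theory Submission
  imports Defs "HOL-Analysis.Analysis"
begin

text \<open>The graph of the energy relation of an energy timed path is a compact convex subset of
  E \<times> E.  It is convex because two runs along the same path can be mixed linearly: clock values
  and energies are affine in the initial energy and the delays, and all constraints are convex.
  It is compact because a delay in a state of rate 0 can be cut down to just above the largest
  clock constant without changing the effect of the run, while every other delay is bounded by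
  the width of E divided by the rate; a convergent subsequence of the delays then gives the
  limit run.  Both properties are preserved by composition.

  For a relation R with compact convex graph, R^-1 maps closed intervals to closed intervals
  (projections of compact convex sets), and by compactness R^-1 commutes with intersections of
  decreasing chains of closed sets.  So the intersection of the iterates of R^-1 on E is a
  fixpoint, and it contains every S \<subseteq> E each point of which has an R-successor in S, in
  particular the set of starting points of infinite R-chains.\<close>

section \<open>Graphs of relations\<close>

definition rel_graph :: "('a \<Rightarrow> 'b \<Rightarrow> bool) \<Rightarrow> ('a \<times> 'b) set" where
  "rel_graph R = {(x, y). R x y}"

lemma mem_rel_graph [simp]: "(x, y) \<in> rel_graph R \<longleftrightarrow> R x y"
  by (simp add: rel_graph_def)

lemma rel_graph_relcompp:
  "rel_graph (R1 OO R2) =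
     (\<lambda>(xy, yz). (fst xy, snd yz)) ` ((rel_graph R1 \<times> rel_graph R2) \<inter> {(xy, yz). snd xy = fst yz})"
  by (force simp: rel_graph_def image_iff)

lemma compact_rel_graph_relcompp:
  fixes R1 :: "'a::topological_space \<Rightarrow> 'b::t2_space \<Rightarrow> bool" and R2 :: "'b \<Rightarrow> 'c::topological_space \<Rightarrow> bool"
  assumes "compact (rel_graph R1)" "compact (rel_graph R2)"
  shows "compact (rel_graph (R1 OO R2))"
  unfolding rel_graph_relcompp
proof (rule compact_continuous_image)
  have "closed {(xy :: 'a \<times> 'b, yz :: 'b \<times> 'c). snd xy = fst yz}"
    unfolding case_prod_beta by (intro closed_Collect_eq continuous_intros)
  then show "compact ((rel_graph R1 \<times> rel_graph R2) \<inter> {(xy, yz). snd xy = fst yz})"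
    using assms by (intro compact_Int_closed compact_Times)
qed (simp add: case_prod_beta; intro continuous_intros)

lemma convex_rel_graph_relcompp:
  fixes R1 :: "'a::real_vector \<Rightarrow> 'b::real_vector \<Rightarrow> bool" and R2 :: "'b \<Rightarrow> 'c::real_vector \<Rightarrow> bool"
  assumes "convex (rel_graph R1)" "convex (rel_graph R2)"
  shows "convex (rel_graph (R1 OO R2))"
  unfolding rel_graph_relcompp
proof (rule convex_linear_image)
  show "linear (\<lambda>(xy :: 'a \<times> 'b, yz :: 'b \<times> 'c). (fst xy, snd yz))"
    by (auto simp: linear_iff)
  have "convex {(xy :: 'a \<times> 'b, yz :: 'b \<times> 'c). snd xy = fst yz}"
    by (auto simp: convex_def)
  then show "convex ((rel_graph R1 \<times> rel_graph R2) \<inter> {(xy, yz). snd xy = fst yz})"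
    using assms by (intro convex_Int convex_Times)
qed

section \<open>Runs of an energy timed path as delay vectors\<close>

abbreviation state_rate :: "('s, 'c) etp \<Rightarrow> nat \<Rightarrow> real" where
  "state_rate p i \<equiv> P_rate p (P_states p ! i)"

abbreviation state_inv :: "('s, 'c) etp \<Rightarrow> nat \<Rightarrow> 'c constr list" where
  "state_inv p i \<equiv> P_inv p (P_states p ! i)"

text \<open>clock_val p d i and energy p w0 d i are the values v i and e i in etp_rel_def, as functions
  of the delays d.\<close>
fun clock_val :: "('s, 'c) etp \<Rightarrow> (nat \<Rightarrow> real) \<Rightarrow> nat \<Rightarrow> 'c \<Rightarrow> real" where
  "clock_val p d 0 = (\<lambda>_. 0)"
| "clock_val p d (Suc i) = (\<lambda>x. if x \<in> tr_reset p i then 0 else clock_val p d i x + d i)"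

fun energy :: "('s, 'c) etp \<Rightarrow> real \<Rightarrow> (nat \<Rightarrow> real) \<Rightarrow> nat \<Rightarrow> real" where
  "energy p w0 d 0 = w0"
| "energy p w0 d (Suc i) = energy p w0 d i + d i * state_rate p i + tr_upd p i"

definition final_energy :: "('s, 'c) etp \<Rightarrow> real \<Rightarrow> (nat \<Rightarrow> real) \<Rightarrow> real" where
  "final_energy p w0 d =
     energy p w0 d (length (P_trans p)) + d (length (P_trans p)) * state_rate p (length (P_trans p))"

text \<open>Only the two ends of every delay are constrained: guards, invariants and the energy
  interval are convex, so this is equivalent to the constraint along the whole delay.\<close>
definition admissible_delays :: "real \<Rightarrow> real \<Rightarrow> ('s, 'c) etp \<Rightarrow> real \<Rightarrow> (nat \<Rightarrow> real) \<Rightarrow> bool" where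
  "admissible_delays a b p w0 d \<longleftrightarrow>
     (\<forall>i\<le>length (P_trans p). 0 \<le> d i \<and>
        sat (clock_val p d i) (state_inv p i) \<and>
        sat (\<lambda>x. clock_val p d i x + d i) (state_inv p i) \<and>
        energy p w0 d i \<in> {a..b} \<and> energy p w0 d i + d i * state_rate p i \<in> {a..b}) \<and>
     (\<forall>i<length (P_trans p). sat (\<lambda>x. clock_val p d i x + d i) (tr_guard p i)) \<and>
     (\<forall>x. clock_val p d (length (P_trans p)) x + d (length (P_trans p)) = 0)"

lemma sat_delay_between:
  assumes "sat v g" "sat (\<lambda>x. v x + d) g" "0 \<le> t" "t \<le> d"
  shows "sat (\<lambda>x. v x + t) g"
  unfolding sat_def
proof
  fix c assume "c \<in> set g"
  then have "sat_atom v c" "sat_atom (\<lambda>x. v x + d) c" using assms(1,2) unfolding sat_def by auto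
  then show "sat_atom (\<lambda>x. v x + t) c" using assms(3,4) by (cases c) auto
qed

lemma energy_delay_between:
  fixes e d r t :: real
  assumes "e \<in> {a..b}" "e + d * r \<in> {a..b}" "0 \<le> t" "t \<le> d"
  shows "e + t * r \<in> {a..b}"
proof (cases "r \<ge> 0")
  case True
  then have "0 \<le> t * r" "t * r \<le> d * r" using assms by (auto intro: mult_right_mono)
  then show ?thesis using assms by auto
next
  case False
  then have "t * r \<le> 0" "d * r \<le> t * r"
    using assms by (auto intro: mult_right_mono_neg mult_nonneg_nonpos)
  then show ?thesis using assms by auto
qed

lemma etp_rel_admissible_delays:
  assumes "etp_rel {a..b} p w0 w1"
  obtains d where "admissible_delays a b p w0 d" "w1 = final_energy p w0 d"
proof -
  let ?n = "length (P_trans p)"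
  obtain v e d where
    v0: "v 0 = (\<lambda>_. 0)" and e0: "e 0 = w0" and
    delay: "\<forall>i\<le>?n. d i \<ge> 0 \<and>
      (\<forall>t\<in>{0..d i}. sat (\<lambda>x. v i x + t) (state_inv p i) \<and> e i + t * state_rate p i \<in> {a..b})" and
    trans: "\<forall>i<?n. sat (\<lambda>x. v i x + d i) (tr_guard p i) \<and>
      e (Suc i) = e i + d i * state_rate p i + tr_upd p i \<and> e (Suc i) \<in> {a..b} \<and>
      v (Suc i) = (\<lambda>x. if x \<in> tr_reset p i then 0 else v i x + d i)" and
    final: "(\<lambda>x. v ?n x + d ?n) = (\<lambda>_. 0)" "w1 = e ?n + d ?n * state_rate p ?n"
    using assms unfolding etp_rel_def Let_def by blast
  have run_eq: "v i = clock_val p d i \<and> e i = energy p w0 d i" if "i \<le> ?n" for i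
    using that
  proof (induction i)
    case (Suc i) then show ?case using trans[rule_format, of i] by auto
  qed (simp add: v0 e0)
  have "admissible_delays a b p w0 d"
    unfolding admissible_delays_def
  proof (intro conjI allI impI)
    fix i assume i: "i \<le> ?n"
    have d: "0 \<le> d i" and along:
      "\<forall>t\<in>{0..d i}. sat (\<lambda>x. v i x + t) (state_inv p i) \<and> e i + t * state_rate p i \<in> {a..b}"
      using delay i by auto
    note along[rule_format, of 0] along[rule_format, of "d i"]
    then show "0 \<le> d i" "sat (clock_val p d i) (state_inv p i)"
      "sat (\<lambda>x. clock_val p d i x + d i) (state_inv p i)" "energy p w0 d i \<in> {a..b}"
      "energy p w0 d i + d i * state_rate p i \<in> {a..b}"
      using d run_eq[OF i] by auto
  next
    fix i assume "i < ?n"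
    then show "sat (\<lambda>x. clock_val p d i x + d i) (tr_guard p i)" using trans run_eq[of i] by auto
  next
    fix x show "clock_val p d ?n x + d ?n = 0"
      using fun_cong[OF final(1), of x] run_eq[of ?n] by simp
  qed
  moreover have "w1 = final_energy p w0 d"
    using final(2) run_eq[of ?n] unfolding final_energy_def by simp
  ultimately show ?thesis by (rule that)
qed

lemma admissible_delays_etp_rel:
  assumes adm: "admissible_delays a b p w0 d"
  shows "etp_rel {a..b} p w0 (final_energy p w0 d)"
  unfolding etp_rel_def Let_def
proof (intro exI conjI allI impI ballI)
  fix i t assume i: "i \<le> length (P_trans p)" and t: "t \<in> {0..d i}"
  show "sat (\<lambda>x. clock_val p d i x + t) (state_inv p i)"
    using adm i t unfolding admissible_delays_def by (auto intro: sat_delay_between)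
  show "energy p w0 d i + t * state_rate p i \<in> {a..b}"
    using adm i t energy_delay_between[of "energy p w0 d i" a b "d i" "state_rate p i" t]
    unfolding admissible_delays_def by auto
next
  fix i assume "i < length (P_trans p)"
  then have "Suc i \<le> length (P_trans p)" by simp
  then show "energy p w0 d (Suc i) \<in> {a..b}"
    using adm unfolding admissible_delays_def by blast
qed (use adm in \<open>auto simp: admissible_delays_def final_energy_def\<close>)

lemma etp_rel_iff_admissible_delays:
  "etp_rel {a..b} p w0 w1 \<longleftrightarrow> (\<exists>d. admissible_delays a b p w0 d \<and> w1 = final_energy p w0 d)"
  by (blast elim: etp_rel_admissible_delays intro: admissible_delays_etp_rel)

section \<open>Convexity\<close>

lemma clock_val_lincomb:
  "clock_val p (\<lambda>j. u * d j + v * d' j) i x = u * clock_val p d i x + v * clock_val p d' i x"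
  by (induction i) (auto simp: algebra_simps)

lemma energy_convex_comb:
  assumes "u + v = 1"
  shows "energy p (u * w + v * w') (\<lambda>j. u * d j + v * d' j) i = u * energy p w d i + v * energy p w' d' i"
proof (induction i)
  case (Suc i)
  have "tr_upd p i = u * tr_upd p i + v * tr_upd p i"
    using assms by (metis distrib_right mult_1)
  then show ?case using Suc by (simp add: algebra_simps)
qed simp

lemma convex_bound_ge:
  fixes x y c u v :: real
  assumes "c \<le> x" "c \<le> y" "0 \<le> u" "0 \<le> v" "u + v = 1"
  shows "c \<le> u * x + v * y"
  using convex_bound_le[of "-x" "-c" "-y" u v] assms by simp

lemma sat_convex_comb:
  assumes "sat f g" "sat f' g" "0 \<le> u" "0 \<le> v" "u + v = 1"
  shows "sat (\<lambda>x. u * f x + v * f' x) g"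
  unfolding sat_def
proof
  fix c assume "c \<in> set g"
  then have "sat_atom f c" "sat_atom f' c" using assms(1,2) unfolding sat_def by auto
  then show "sat_atom (\<lambda>x. u * f x + v * f' x) c"
    using assms(3-5) convex_bound_le[of _ _ _ u v] convex_bound_ge[of _ _ _ u v]
    by (cases c) (auto simp: distrib_right[symmetric])
qed

lemma interval_convex_comb:
  fixes x y u v :: real
  assumes "x \<in> {a..b}" "y \<in> {a..b}" "0 \<le> u" "0 \<le> v" "u + v = 1"
  shows "u * x + v * y \<in> {a..b}"
  using convexD[OF convex_real_interval(5) assms] by simp

lemma admissible_delays_convex_comb:
  assumes adm: "admissible_delays a b p w d" "admissible_delays a b p w' d'"
    and uv: "0 \<le> u" "0 \<le> v" "u + v = 1"
  defines "dd \<equiv> \<lambda>j. u * d j + v * d' j"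
  shows "admissible_delays a b p (u * w + v * w') dd"
    and "final_energy p (u * w + v * w') dd = u * final_energy p w d + v * final_energy p w' d'"
proof -
  have clock: "clock_val p dd i = (\<lambda>x. u * clock_val p d i x + v * clock_val p d' i x)"
    "(\<lambda>x. u * clock_val p d i x + v * clock_val p d' i x + dd i) =
       (\<lambda>x. u * (clock_val p d i x + d i) + v * (clock_val p d' i x + d' i))" for i
    unfolding dd_def by (auto simp: clock_val_lincomb algebra_simps)
  have en: "energy p (u * w + v * w') dd i = u * energy p w d i + v * energy p w' d' i"
    "u * energy p w d i + v * energy p w' d' i + dd i * state_rate p i =
       u * (energy p w d i + d i * state_rate p i) + v * (energy p w' d' i + d' i * state_rate p i)" for i
    unfolding dd_def energy_convex_comb[OF uv(3)] by (auto simp: algebra_simps)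
  show "admissible_delays a b p (u * w + v * w') dd"
    unfolding admissible_delays_def clock en
  proof (intro conjI allI impI)
    fix i assume "i \<le> length (P_trans p)"
    then have G: "0 \<le> d i" "sat (clock_val p d i) (state_inv p i)"
        "sat (\<lambda>x. clock_val p d i x + d i) (state_inv p i)" "energy p w d i \<in> {a..b}"
        "energy p w d i + d i * state_rate p i \<in> {a..b}"
      and G': "0 \<le> d' i" "sat (clock_val p d' i) (state_inv p i)"
        "sat (\<lambda>x. clock_val p d' i x + d' i) (state_inv p i)" "energy p w' d' i \<in> {a..b}"
        "energy p w' d' i + d' i * state_rate p i \<in> {a..b}"
      using adm unfolding admissible_delays_def by blast+
    show "0 \<le> dd i" using G(1) G'(1) uv by (simp add: dd_def)
    show "sat (\<lambda>x. u * clock_val p d i x + v * clock_val p d' i x) (state_inv p i)"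
      using G(2) G'(2) uv by (rule sat_convex_comb)
    show "sat (\<lambda>x. u * (clock_val p d i x + d i) + v * (clock_val p d' i x + d' i)) (state_inv p i)"
      using G(3) G'(3) uv by (rule sat_convex_comb)
    show "u * energy p w d i + v * energy p w' d' i \<in> {a..b}"
      using G(4) G'(4) uv by (rule interval_convex_comb)
    show "u * (energy p w d i + d i * state_rate p i) + v * (energy p w' d' i + d' i * state_rate p i) \<in> {a..b}"
      using G(5) G'(5) uv by (rule interval_convex_comb)
  next
    fix i assume "i < length (P_trans p)"
    then show "sat (\<lambda>x. u * (clock_val p d i x + d i) + v * (clock_val p d' i x + d' i)) (tr_guard p i)"
      using adm uv unfolding admissible_delays_def by (auto intro!: sat_convex_comb)
  next
    fix x
    let ?n = "length (P_trans p)"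
    have "u * clock_val p d ?n x + v * clock_val p d' ?n x + dd ?n =
        u * (clock_val p d ?n x + d ?n) + v * (clock_val p d' ?n x + d' ?n)"
      by (simp add: dd_def algebra_simps)
    also have "\<dots> = 0"
      using adm unfolding admissible_delays_def by simp
    finally show "u * clock_val p d ?n x + v * clock_val p d' ?n x + dd ?n = 0" .
  qed
  show "final_energy p (u * w + v * w') dd = u * final_energy p w d + v * final_energy p w' d'"
    unfolding final_energy_def en ..
qed

lemma convex_rel_graph_etp_rel: "convex (rel_graph (etp_rel {a..b} p))"
proof (rule convexI)
  fix z z' :: "real \<times> real" and u v :: real
  assume "z \<in> rel_graph (etp_rel {a..b} p)" "z' \<in> rel_graph (etp_rel {a..b} p)"
    and uv: "0 \<le> u" "0 \<le> v" "u + v = 1"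
  then obtain d d' where
    adm: "admissible_delays a b p (fst z) d" "admissible_delays a b p (fst z') d'" and
    fin: "snd z = final_energy p (fst z) d" "snd z' = final_energy p (fst z') d'"
    unfolding rel_graph_def etp_rel_iff_admissible_delays by auto
  show "u *\<^sub>R z + v *\<^sub>R z' \<in> rel_graph (etp_rel {a..b} p)"
    using admissible_delays_convex_comb[OF adm uv] fin
    unfolding rel_graph_def etp_rel_iff_admissible_delays by (auto simp: case_prod_beta)
qed

section \<open>Compactness\<close>

definition clock_bound :: "('s, 'c) etp \<Rightarrow> real" where
  "clock_bound p = 1 + Max (insert 0 (abs ` constr_const `
     (\<Union>i\<le>length (P_trans p). set (state_inv p i) \<union> set (tr_guard p i))))"

lemma abs_constr_const_less_clock_bound:
  assumes "i \<le> length (P_trans p)" "c \<in> set (state_inv p i) \<union> set (tr_guard p i)"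
  shows "\<bar>constr_const c\<bar> < clock_bound p"
proof -
  have "\<bar>constr_const c\<bar> \<le> Max (insert 0 (abs ` constr_const `
      (\<Union>i\<le>length (P_trans p). set (state_inv p i) \<union> set (tr_guard p i))))"
    using assms by (intro Max_ge) auto
  then show ?thesis unfolding clock_bound_def by linarith
qed

lemma clock_bound_pos: "0 < clock_bound p"
proof -
  have "0 \<le> Max (insert 0 (abs ` constr_const `
      (\<Union>i\<le>length (P_trans p). set (state_inv p i) \<union> set (tr_guard p i))))"
    by (intro Max_ge) auto
  then show ?thesis unfolding clock_bound_def by linarith
qed

text \<open>Delays in states of rate 0 do not change the energy and are capped at clock_bound.  Every
  clock then keeps its value or stays above all constants of the path (agree_beyond), so it
  satisfies the same constraints.\<close>
definition truncate_delays :: "('s, 'c) etp \<Rightarrow> (nat \<Rightarrow> real) \<Rightarrow> nat \<Rightarrow> real" where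
  "truncate_delays p d i = (if state_rate p i = 0 then min (d i) (clock_bound p) else d i)"

definition agree_beyond :: "real \<Rightarrow> real \<Rightarrow> real \<Rightarrow> bool" where
  "agree_beyond M x' x \<longleftrightarrow> x' \<le> x \<and> (x' = x \<or> M \<le> x')"

lemma agree_beyond_add:
  assumes "agree_beyond M x' x" "0 \<le> x'" "0 \<le> t" "t' = t \<or> (t' = M \<and> M \<le> t)"
  shows "agree_beyond M (x' + t') (x + t)"
  using assms unfolding agree_beyond_def by auto

lemma sat_agree_beyond:
  assumes "\<And>x. agree_beyond M (f' x) (f x)" "sat f g" "\<And>c. c \<in> set g \<Longrightarrow> \<bar>constr_const c\<bar> < M"
  shows "sat f' g"
  unfolding sat_def
proof
  fix c assume c: "c \<in> set g"
  then have c_sat: "sat_atom f c" and c_bound: "\<bar>constr_const c\<bar> < M"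
    using assms(2,3) unfolding sat_def by auto
  show "sat_atom f' c"
  proof (cases c)
    case (CLe x k) then show ?thesis using c_sat c_bound assms(1)[of x] unfolding agree_beyond_def by auto
  next
    case (CGe x k) then show ?thesis using c_sat c_bound assms(1)[of x] unfolding agree_beyond_def by auto
  next
    case (CEq x k) then show ?thesis using c_sat c_bound assms(1)[of x] unfolding agree_beyond_def by auto
  qed
qed

lemma truncate_delays_cases:
  "truncate_delays p d i = d i \<or> (truncate_delays p d i = clock_bound p \<and> clock_bound p \<le> d i)"
  unfolding truncate_delays_def by auto

lemma truncate_delays_nonneg: "0 \<le> d i \<Longrightarrow> 0 \<le> truncate_delays p d i"
  unfolding truncate_delays_def using clock_bound_pos[of p] by auto

lemma clock_val_nonneg: "(\<And>j. j < i \<Longrightarrow> 0 \<le> d j) \<Longrightarrow> 0 \<le> clock_val p d i x"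
  by (induction i) auto

lemma agree_beyond_clock_val_truncate:
  assumes "\<And>j. j \<le> i \<Longrightarrow> 0 \<le> d j"
  shows "agree_beyond (clock_bound p) (clock_val p (truncate_delays p d) i x) (clock_val p d i x)"
    and "agree_beyond (clock_bound p)
      (clock_val p (truncate_delays p d) i x + truncate_delays p d i) (clock_val p d i x + d i)"
proof -
  have nonneg: "0 \<le> clock_val p (truncate_delays p d) k x" if "k \<le> i" for k
    using that assms by (intro clock_val_nonneg truncate_delays_nonneg) auto
  have step: "agree_beyond (clock_bound p) (clock_val p (truncate_delays p d) k x) (clock_val p d k x)
      \<Longrightarrow> k \<le> i \<Longrightarrow> agree_beyond (clock_bound p)
        (clock_val p (truncate_delays p d) k x + truncate_delays p d k) (clock_val p d k x + d k)" for k
    using nonneg assms by (intro agree_beyond_add truncate_delays_cases) auto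
  have "agree_beyond (clock_bound p) (clock_val p (truncate_delays p d) k x) (clock_val p d k x)"
    if "k \<le> i" for k
    using that
  proof (induction k)
    case (Suc k)
    then show ?case using step[of k] by (auto simp: agree_beyond_def)
  qed (simp add: agree_beyond_def)
  then show "agree_beyond (clock_bound p) (clock_val p (truncate_delays p d) i x) (clock_val p d i x)"
    and "agree_beyond (clock_bound p)
      (clock_val p (truncate_delays p d) i x + truncate_delays p d i) (clock_val p d i x + d i)"
    using step by auto
qed

lemma energy_truncate_delays: "energy p w0 (truncate_delays p d) i = energy p w0 d i"
  by (induction i) (auto simp: truncate_delays_def)

lemma delay_energy_truncate_delays: "truncate_delays p d i * state_rate p i = d i * state_rate p i"
  by (simp add: truncate_delays_def)

lemma admissible_truncate_delays:
  assumes adm: "admissible_delays a b p w0 d"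
  shows "admissible_delays a b p w0 (truncate_delays p d)"
    and "final_energy p w0 (truncate_delays p d) = final_energy p w0 d"
proof -
  let ?n = "length (P_trans p)" and ?d' = "truncate_delays p d" and ?M = "clock_bound p"
  have agree: "agree_beyond ?M (clock_val p ?d' i x) (clock_val p d i x)"
    "agree_beyond ?M (clock_val p ?d' i x + ?d' i) (clock_val p d i x + d i)" if "i \<le> ?n" for i x
    using adm that unfolding admissible_delays_def by (auto intro!: agree_beyond_clock_val_truncate)
  have const: "\<bar>constr_const c\<bar> < ?M"
    if "i \<le> ?n" "c \<in> set (state_inv p i) \<union> set (tr_guard p i)" for i c
    using abs_constr_const_less_clock_bound[OF that] .
  show "admissible_delays a b p w0 ?d'"
    unfolding admissible_delays_def energy_truncate_delays delay_energy_truncate_delays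
  proof (intro conjI allI impI)
    fix i assume i: "i \<le> ?n"
    then have G: "0 \<le> d i" "sat (clock_val p d i) (state_inv p i)"
      "sat (\<lambda>x. clock_val p d i x + d i) (state_inv p i)" "energy p w0 d i \<in> {a..b}"
      "energy p w0 d i + d i * state_rate p i \<in> {a..b}"
      using adm unfolding admissible_delays_def by blast+
    show "0 \<le> ?d' i" using G(1) by (rule truncate_delays_nonneg)
    show "sat (clock_val p ?d' i) (state_inv p i)"
      using agree(1)[OF i] G(2) const[OF i] by (rule sat_agree_beyond) blast
    show "sat (\<lambda>x. clock_val p ?d' i x + ?d' i) (state_inv p i)"
      using agree(2)[OF i] G(3) const[OF i] by (rule sat_agree_beyond) blast
    show "energy p w0 d i \<in> {a..b}" "energy p w0 d i + d i * state_rate p i \<in> {a..b}"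
      using G(4,5) .
  next
    fix i assume i: "i < ?n"
    then have "sat (\<lambda>x. clock_val p d i x + d i) (tr_guard p i)"
      using adm unfolding admissible_delays_def by blast
    have i': "i \<le> ?n" using i by simp
    show "sat (\<lambda>x. clock_val p ?d' i x + ?d' i) (tr_guard p i)"
      by (rule sat_agree_beyond[OF agree(2)[OF i'] \<open>sat _ (tr_guard p i)\<close>]) (use const[OF i'] in blast)
  next
    fix x
    have "clock_val p d ?n x + d ?n = 0" using adm unfolding admissible_delays_def by blast
    then show "clock_val p ?d' ?n x + ?d' ?n = 0"
      using agree(2)[of ?n x] clock_bound_pos[of p] unfolding agree_beyond_def by auto
  qed
  show "final_energy p w0 ?d' = final_energy p w0 d"
    unfolding final_energy_def energy_truncate_delays delay_energy_truncate_delays ..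
qed

text \<open>Delays in states of nonzero rate are bounded by the width of the energy interval divided
  by the rate; for rate 0 the summand is 0 (division by zero) and clock_bound takes over.\<close>
definition delay_bound :: "real \<Rightarrow> real \<Rightarrow> ('s, 'c) etp \<Rightarrow> real" where
  "delay_bound a b p = clock_bound p + (\<Sum>i\<le>length (P_trans p). (b - a) / \<bar>state_rate p i\<bar>)"

lemma truncated_delay_le_delay_bound:
  assumes adm: "admissible_delays a b p w0 (truncate_delays p d)" and i: "i \<le> length (P_trans p)"
  shows "truncate_delays p d i \<le> delay_bound a b p"
proof -
  let ?d' = "truncate_delays p d"
  have G: "0 \<le> ?d' i" "energy p w0 ?d' i \<in> {a..b}" "energy p w0 ?d' i + ?d' i * state_rate p i \<in> {a..b}"
    using adm i unfolding admissible_delays_def by blast+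
  have terms: "0 \<le> (b - a) / \<bar>state_rate p j\<bar>" for j using G(2) by simp
  then have sum: "0 \<le> (\<Sum>j\<le>length (P_trans p). (b - a) / \<bar>state_rate p j\<bar>)"
    by (simp add: sum_nonneg)
  show ?thesis
  proof (cases "state_rate p i = 0")
    case True
    then have "?d' i \<le> clock_bound p" unfolding truncate_delays_def by simp
    then show ?thesis unfolding delay_bound_def using sum by linarith
  next
    case False
    have "?d' i * \<bar>state_rate p i\<bar> \<le> b - a"
      using G by (auto simp: abs_mult abs_le_iff)
    then have "?d' i \<le> (b - a) / \<bar>state_rate p i\<bar>"
      using False by (simp add: pos_le_divide_eq)
    also have "\<dots> \<le> (\<Sum>j\<le>length (P_trans p). (b - a) / \<bar>state_rate p j\<bar>)"
      using i terms by (intro member_le_sum) auto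
    finally show ?thesis unfolding delay_bound_def using clock_bound_pos[of p] by linarith
  qed
qed

lemma etp_rel_bounded_delays:
  assumes "etp_rel {a..b} p w0 w1"
  obtains d where "admissible_delays a b p w0 d" "w1 = final_energy p w0 d"
    "\<And>i. i \<le> length (P_trans p) \<Longrightarrow> d i \<in> {0..delay_bound a b p}"
proof -
  obtain d where adm: "admissible_delays a b p w0 d" and w1: "w1 = final_energy p w0 d"
    using assms unfolding etp_rel_iff_admissible_delays by blast
  note adm' = admissible_truncate_delays[OF adm]
  have "truncate_delays p d i \<in> {0..delay_bound a b p}" if "i \<le> length (P_trans p)" for i
    using adm'(1) that truncated_delay_le_delay_bound[OF adm'(1) that]
    unfolding admissible_delays_def by auto
  then show ?thesis using that[OF adm'(1)] adm'(2) w1 by simp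
qed

lemma bounded_convergent_subseq:
  fixes D :: "nat \<Rightarrow> nat \<Rightarrow> real"
  assumes "\<And>i. i \<le> n \<Longrightarrow> bounded (range (\<lambda>k. D k i))"
  obtains r l where "strict_mono r" "\<And>i. i \<le> n \<Longrightarrow> (\<lambda>k. D (r k) i) \<longlonglongrightarrow> l i"
proof -
  have "\<exists>l r. strict_mono r \<and>
      (\<forall>e>0. \<forall>\<^sub>F k in sequentially. \<forall>i\<in>{..n}. dist (D (r k) i) (l i) < e)"
    using compact_lemma_general[of "{..n}" "\<lambda>x i. x i" D "\<lambda>x. x"] assms
    by (auto simp: image_image)
  then obtain l r where "strict_mono r"
    and conv: "\<forall>e>0. \<forall>\<^sub>F k in sequentially. \<forall>i\<in>{..n}. dist (D (r k) i) (l i) < e"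
    by blast
  moreover have "(\<lambda>k. D (r k) i) \<longlonglongrightarrow> l i" if "i \<le> n" for i
    unfolding tendsto_iff using conv that by (auto elim!: eventually_mono)
  ultimately show ?thesis using that by blast
qed

lemma clock_val_tendsto:
  assumes "\<forall>j\<le>n. (\<lambda>k. D k j) \<longlonglongrightarrow> l j" "i \<le> n"
  shows "(\<lambda>k. clock_val p (D k) i x) \<longlonglongrightarrow> clock_val p l i x"
    and "(\<lambda>k. clock_val p (D k) i x + D k i) \<longlonglongrightarrow> clock_val p l i x + l i"
proof -
  show entry: "(\<lambda>k. clock_val p (D k) i x) \<longlonglongrightarrow> clock_val p l i x"
    using assms by (induction i) (auto intro!: tendsto_intros)
  show "(\<lambda>k. clock_val p (D k) i x + D k i) \<longlonglongrightarrow> clock_val p l i x + l i"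
    using entry assms by (intro tendsto_add) auto
qed

lemma energy_tendsto:
  assumes "W \<longlonglongrightarrow> w" "\<forall>j\<le>n. (\<lambda>k. D k j) \<longlonglongrightarrow> l j" "i \<le> n"
  shows "(\<lambda>k. energy p (W k) (D k) i) \<longlonglongrightarrow> energy p w l i"
    and "(\<lambda>k. energy p (W k) (D k) i + D k i * state_rate p i) \<longlonglongrightarrow> energy p w l i + l i * state_rate p i"
proof -
  show entry: "(\<lambda>k. energy p (W k) (D k) i) \<longlonglongrightarrow> energy p w l i"
    using assms by (induction i) (auto intro!: tendsto_intros)
  show "(\<lambda>k. energy p (W k) (D k) i + D k i * state_rate p i) \<longlonglongrightarrow> energy p w l i + l i * state_rate p i"
    using entry assms by (intro tendsto_add tendsto_mult tendsto_const) auto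
qed

lemma sat_tendsto:
  assumes "\<And>x. (\<lambda>k. F k x) \<longlonglongrightarrow> f x" "\<And>k. sat (F k) g"
  shows "sat f g"
  unfolding sat_def
proof
  fix c assume "c \<in> set g"
  then have sat_k: "sat_atom (F k) c" for k using assms(2) unfolding sat_def by blast
  show "sat_atom f c"
  proof (cases c)
    case (CLe x m)
    then show ?thesis using closed_sequentially[OF closed_atMost _ assms(1)] sat_k by auto
  next
    case (CGe x m)
    then show ?thesis using closed_sequentially[OF closed_atLeast _ assms(1)] sat_k by auto
  next
    case (CEq x m)
    then show ?thesis using closed_sequentially[OF closed_singleton _ assms(1)] sat_k by auto
  qed
qed

lemma admissible_delays_limit:
  assumes adm: "\<And>k. admissible_delays a b p (W k) (D k)" and W: "W \<longlonglongrightarrow> w"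
    and D: "\<And>i. i \<le> length (P_trans p) \<Longrightarrow> (\<lambda>k. D k i) \<longlonglongrightarrow> l i"
  shows "admissible_delays a b p w l"
    and "(\<lambda>k. final_energy p (W k) (D k)) \<longlonglongrightarrow> final_energy p w l"
proof -
  let ?n = "length (P_trans p)"
  have "\<forall>j\<le>?n. (\<lambda>k. D k j) \<longlonglongrightarrow> l j" using D by blast
  note clock = clock_val_tendsto[where p = p, OF this] and en = energy_tendsto[where p = p, OF W this]
  show "admissible_delays a b p w l"
    unfolding admissible_delays_def
  proof (intro conjI allI impI)
    fix i assume i: "i \<le> ?n"
    have G: "0 \<le> D k i" "sat (clock_val p (D k) i) (state_inv p i)"
      "sat (\<lambda>x. clock_val p (D k) i x + D k i) (state_inv p i)" "energy p (W k) (D k) i \<in> {a..b}"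
      "energy p (W k) (D k) i + D k i * state_rate p i \<in> {a..b}" for k
      using adm[of k] i unfolding admissible_delays_def by blast+
    have "D k i \<in> {0..}" for k using G(1) by simp
    from closed_sequentially[OF closed_atLeast this D[OF i]] show "0 \<le> l i" by simp
    show "sat (clock_val p l i) (state_inv p i)"
      using clock(1)[OF i] G(2) by (rule sat_tendsto)
    show "sat (\<lambda>x. clock_val p l i x + l i) (state_inv p i)"
      using clock(2)[OF i] G(3) by (rule sat_tendsto)
    show "energy p w l i \<in> {a..b}"
      using closed_sequentially[OF closed_atLeastAtMost G(4) en(1)[OF i]] .
    show "energy p w l i + l i * state_rate p i \<in> {a..b}"
      using closed_sequentially[OF closed_atLeastAtMost G(5) en(2)[OF i]] .
  next
    fix i assume i: "i < ?n"
    then have "sat (\<lambda>x. clock_val p (D k) i x + D k i) (tr_guard p i)" for k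
      using adm[of k] unfolding admissible_delays_def by blast
    then show "sat (\<lambda>x. clock_val p l i x + l i) (tr_guard p i)"
      using clock(2)[OF less_imp_le[OF i]] by (rule sat_tendsto[rotated])
  next
    fix x
    have "(\<lambda>k. clock_val p (D k) ?n x + D k ?n) = (\<lambda>k. 0)"
      using adm unfolding admissible_delays_def by simp
    then show "clock_val p l ?n x + l ?n = 0"
      using LIMSEQ_unique[OF clock(2)[OF order_refl, of x]] by simp
  qed
  show "(\<lambda>k. final_energy p (W k) (D k)) \<longlonglongrightarrow> final_energy p w l"
    unfolding final_energy_def using en(2)[OF order_refl] .
qed

lemma rel_graph_etp_rel_subset: "rel_graph (etp_rel {a..b} p) \<subseteq> {a..b} \<times> {a..b}"
proof
  fix z assume "z \<in> rel_graph (etp_rel {a..b} p)"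
  then obtain d where adm: "admissible_delays a b p (fst z) d" and fin: "snd z = final_energy p (fst z) d"
    unfolding rel_graph_def etp_rel_iff_admissible_delays by auto
  have "energy p (fst z) d 0 \<in> {a..b}" "final_energy p (fst z) d \<in> {a..b}"
    using adm unfolding admissible_delays_def final_energy_def by blast+
  then show "z \<in> {a..b} \<times> {a..b}" using fin by (simp add: mem_Times_iff)
qed

lemma closed_rel_graph_etp_rel: "closed (rel_graph (etp_rel {a..b} p))"
  unfolding closed_sequential_limits
proof (intro allI impI, elim conjE)
  fix Z :: "nat \<Rightarrow> real \<times> real" and z
  assume Z: "\<forall>k. Z k \<in> rel_graph (etp_rel {a..b} p)" and lim: "Z \<longlonglongrightarrow> z"
  let ?n = "length (P_trans p)"
  have "\<forall>k. \<exists>d. admissible_delays a b p (fst (Z k)) d \<and> snd (Z k) = final_energy p (fst (Z k)) d \<and>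
      (\<forall>i\<le>?n. d i \<in> {0..delay_bound a b p})"
  proof
    fix k
    have "etp_rel {a..b} p (fst (Z k)) (snd (Z k))"
      using Z unfolding rel_graph_def by (auto simp: case_prod_beta)
    then obtain d where "admissible_delays a b p (fst (Z k)) d" "snd (Z k) = final_energy p (fst (Z k)) d"
      "\<And>i. i \<le> ?n \<Longrightarrow> d i \<in> {0..delay_bound a b p}"
      by (rule etp_rel_bounded_delays) blast
    then show "\<exists>d. admissible_delays a b p (fst (Z k)) d \<and> snd (Z k) = final_energy p (fst (Z k)) d \<and>
      (\<forall>i\<le>?n. d i \<in> {0..delay_bound a b p})" by blast
  qed
  then obtain D where adm: "\<And>k. admissible_delays a b p (fst (Z k)) (D k)"
    and fin: "\<And>k. snd (Z k) = final_energy p (fst (Z k)) (D k)"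
    and bnd: "\<And>k i. i \<le> ?n \<Longrightarrow> D k i \<in> {0..delay_bound a b p}"
    by (auto dest!: choice)
  have "bounded (range (\<lambda>k. D k i))" if "i \<le> ?n" for i
    using bnd[OF that] by (intro bounded_subset[OF bounded_closed_interval, of _ 0 "delay_bound a b p"]) auto
  then obtain r l where r: "strict_mono r" and l: "\<And>i. i \<le> ?n \<Longrightarrow> (\<lambda>k. D (r k) i) \<longlonglongrightarrow> l i"
    by (rule bounded_convergent_subseq) (auto simp del: atLeastAtMost_iff)
  have fst_lim: "(\<lambda>k. fst (Z (r k))) \<longlonglongrightarrow> fst z"
    using LIMSEQ_subseq_LIMSEQ[OF tendsto_fst[OF lim] r] by (simp add: o_def)
  have snd_lim: "(\<lambda>k. snd (Z (r k))) \<longlonglongrightarrow> snd z"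
    using LIMSEQ_subseq_LIMSEQ[OF tendsto_snd[OF lim] r] by (simp add: o_def)
  note limit = admissible_delays_limit[OF adm fst_lim l]
  have "snd z = final_energy p (fst z) l"
    using LIMSEQ_unique[OF snd_lim] limit(2) fin by simp
  then have "etp_rel {a..b} p (fst z) (snd z)"
    unfolding etp_rel_iff_admissible_delays using limit(1) by blast
  then show "z \<in> rel_graph (etp_rel {a..b} p)" unfolding rel_graph_def by (simp add: case_prod_beta)
qed

lemma compact_rel_graph_etp_rel: "compact (rel_graph (etp_rel {a..b} p))"
proof -
  have "bounded ({a..b} \<times> {a..b :: real})"
    by (intro compact_imp_bounded compact_Times compact_Icc)
  then have "bounded (rel_graph (etp_rel {a..b} p))"
    using rel_graph_etp_rel_subset by (rule bounded_subset)
  then show ?thesis using closed_rel_graph_etp_rel by (simp add: compact_eq_bounded_closed)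
qed

lemma rel_graph_relcompp_subset:
  "rel_graph R1 \<subseteq> E \<times> E \<Longrightarrow> rel_graph R2 \<subseteq> E \<times> E \<Longrightarrow> rel_graph (R1 OO R2) \<subseteq> E \<times> E"
  unfolding rel_graph_def by blast

lemma rel_graph_erel_seq:
  assumes "ps \<noteq> []"
  shows "compact (rel_graph (erel_seq {a..b} ps))" "convex (rel_graph (erel_seq {a..b} ps))"
    "rel_graph (erel_seq {a..b} ps) \<subseteq> {a..b} \<times> {a..b}"
  using assms
proof (induction "{a..b::real}" ps rule: erel_seq.induct)
  case (2 p)
  show "compact (rel_graph (erel_seq {a..b} [p]))" "convex (rel_graph (erel_seq {a..b} [p]))"
    "rel_graph (erel_seq {a..b} [p]) \<subseteq> {a..b} \<times> {a..b}"
    by (simp_all add: compact_rel_graph_etp_rel convex_rel_graph_etp_rel rel_graph_etp_rel_subset)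
next
  case (3 p q ps)
  then show "compact (rel_graph (erel_seq {a..b} (p # q # ps)))"
    "convex (rel_graph (erel_seq {a..b} (p # q # ps)))"
    "rel_graph (erel_seq {a..b} (p # q # ps)) \<subseteq> {a..b} \<times> {a..b}"
    by (simp_all add: compact_rel_graph_relcompp convex_rel_graph_relcompp rel_graph_relcompp_subset
        compact_rel_graph_etp_rel convex_rel_graph_etp_rel rel_graph_etp_rel_subset)
qed simp_all

section \<open>The greatest fixpoint of the preimage map\<close>

definition nu_pre_rel :: "real set \<Rightarrow> (real \<Rightarrow> real \<Rightarrow> bool) \<Rightarrow> real set" where
  "nu_pre_rel E R = (\<Inter>i. (pre_rel E R ^^ i) E)"

lemma nu_pre_rel_subset: "nu_pre_rel E R \<subseteq> E"
proof
  fix w assume "w \<in> nu_pre_rel E R"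
  then have "w \<in> (pre_rel E R ^^ 0) E" unfolding nu_pre_rel_def by blast
  then show "w \<in> E" by simp
qed

lemma pre_rel_mono: "I \<subseteq> J \<Longrightarrow> pre_rel E R I \<subseteq> pre_rel E R J"
  unfolding pre_rel_def by auto

lemma pre_rel_subset: "pre_rel E R I \<subseteq> E"
  unfolding pre_rel_def by auto

lemma decseq_pre_rel_iterates: "decseq (\<lambda>i. (pre_rel E R ^^ i) E)"
proof (rule decseq_SucI)
  show "(pre_rel E R ^^ Suc i) E \<subseteq> (pre_rel E R ^^ i) E" for i
    by (induction i) (simp_all add: pre_rel_subset pre_rel_mono)
qed

lemma pre_rel_eq_fst_image:
  assumes "rel_graph R \<subseteq> E \<times> UNIV"
  shows "pre_rel E R I = fst ` (rel_graph R \<inter> UNIV \<times> I)"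
proof (intro equalityI subsetI)
  fix x assume "x \<in> pre_rel E R I"
  then obtain y where "R x y" "y \<in> I" unfolding pre_rel_def by blast
  then show "x \<in> fst ` (rel_graph R \<inter> UNIV \<times> I)" by (force intro: image_eqI[of x fst "(x, y)"])
next
  fix x assume "x \<in> fst ` (rel_graph R \<inter> UNIV \<times> I)"
  then obtain y where "R x y" "y \<in> I" by auto
  moreover have "(x, y) \<in> rel_graph R" using \<open>R x y\<close> by simp
  with assms have "x \<in> E" by blast
  ultimately show "x \<in> pre_rel E R I" unfolding pre_rel_def by auto
qed

lemma closed_subints_iff_compact_convex:
  "S \<in> closed_subints E \<longleftrightarrow> S \<subseteq> E \<and> compact S \<and> convex S"
proof -
  have "(\<exists>c d. S = {c..d}) \<longleftrightarrow> compact S \<and> convex S"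
    using connected_compact_interval_1[of S] connected_convex_1[of S] by blast
  then show ?thesis unfolding closed_subints_def by blast
qed

lemma pre_rel_closed_subints:
  assumes "compact (rel_graph R)" "convex (rel_graph R)" "rel_graph R \<subseteq> E \<times> UNIV"
    and "I \<in> closed_subints E"
  shows "pre_rel E R I \<in> closed_subints E"
proof -
  have I: "compact I" "convex I" using assms(4) by (auto simp: closed_subints_iff_compact_convex)
  have "compact (pre_rel E R I)"
    unfolding pre_rel_eq_fst_image[OF assms(3)] using assms(1) I
    by (intro compact_continuous_image compact_Int_closed closed_Times compact_imp_closed continuous_intros) auto
  moreover have "convex (pre_rel E R I)"
    unfolding pre_rel_eq_fst_image[OF assms(3)] using assms(2) I
    by (intro convex_linear_image linear_fst convex_Int convex_Times convex_UNIV)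
  ultimately show ?thesis
    unfolding closed_subints_iff_compact_convex using pre_rel_subset by blast
qed

lemma pre_rel_iterates_closed_subints:
  assumes "E \<in> closed_subints E" "\<And>I. I \<in> closed_subints E \<Longrightarrow> pre_rel E R I \<in> closed_subints E"
  shows "(pre_rel E R ^^ i) E \<in> closed_subints E"
  by (induction i) (simp_all add: assms)

lemma closed_subints_INT:
  assumes "\<And>i::nat. F i \<in> closed_subints E"
  shows "(\<Inter>i. F i) \<in> closed_subints E"
proof -
  have F: "F i \<subseteq> E" "compact (F i)" "convex (F i)" for i
    using assms[of i] unfolding closed_subints_iff_compact_convex by blast+
  have "compact (\<Inter>i. F i)"
    by (rule compact_Inter) (use F in auto)
  moreover have "convex (\<Inter>i. F i)"
    by (rule convex_INT) (use F in auto)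
  ultimately show ?thesis
    unfolding closed_subints_iff_compact_convex using F(1) by blast
qed

text \<open>The successors of w0 inside the F i form a decreasing sequence of nonempty compact sets;
  a point of their intersection is a successor inside the intersection of the F i.\<close>
lemma pre_rel_INT_decseq:
  assumes "compact (rel_graph R)" "decseq F" "\<And>i. closed (F i)"
  shows "pre_rel E R (\<Inter>i. F i) = (\<Inter>i. pre_rel E R (F i))"
proof
  show "pre_rel E R (\<Inter>i. F i) \<subseteq> (\<Inter>i. pre_rel E R (F i))"
    by (intro INT_greatest pre_rel_mono INT_lower UNIV_I)
next
  show "(\<Inter>i. pre_rel E R (F i)) \<subseteq> pre_rel E R (\<Inter>i. F i)"
  proof
    fix w0 assume w0: "w0 \<in> (\<Inter>i. pre_rel E R (F i))"
    define G where "G i = snd ` (rel_graph R \<inter> {w0} \<times> UNIV) \<inter> F i" for i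
    have G_iff: "y \<in> G i \<longleftrightarrow> R w0 y \<and> y \<in> F i" for y i
      unfolding G_def by (auto intro: rev_image_eqI[of "(w0, y)"])
    have "\<Inter> (range G) \<noteq> {}"
    proof (rule compact_nest)
      show "compact (G i)" for i
        unfolding G_def using assms(1,3)
        by (intro compact_Int_closed compact_continuous_image continuous_intros closed_Times) auto
      show "G i \<noteq> {}" for i
      proof -
        obtain y where "R w0 y" "y \<in> F i" using w0 unfolding pre_rel_def by blast
        then show ?thesis using G_iff by blast
      qed
      show "G j \<subseteq> G i" if "i \<le> j" for i j
        using decseqD[OF assms(2) that] G_iff by blast
    qed
    then obtain y where "\<forall>i. y \<in> G i" by blast
    then have "\<forall>i. R w0 y \<and> y \<in> F i" using G_iff by blast
    then show "w0 \<in> pre_rel E R (\<Inter>i. F i)"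
      using w0 unfolding pre_rel_def by blast
  qed
qed

lemma subset_nu_pre_rel:
  assumes "S \<subseteq> E" "\<forall>w0\<in>S. \<exists>w1\<in>S. R w0 w1"
  shows "S \<subseteq> nu_pre_rel E R"
proof -
  have "S \<subseteq> (pre_rel E R ^^ i) E" for i
  proof (induction i)
    case (Suc i)
    have "S \<subseteq> pre_rel E R S" using assms unfolding pre_rel_def by auto
    also have "\<dots> \<subseteq> pre_rel E R ((pre_rel E R ^^ i) E)" using Suc by (rule pre_rel_mono)
    finally show ?case by simp
  qed (use assms in simp)
  then show ?thesis unfolding nu_pre_rel_def by blast
qed

lemma INT_Suc_decseq:
  assumes "decseq F"
  shows "(\<Inter>i. F (Suc i)) = (\<Inter>i. F i)"
proof (intro equalityI subsetI)
  fix x assume x: "x \<in> (\<Inter>i. F (Suc i))"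
  show "x \<in> (\<Inter>i. F i)"
  proof
    fix i show "x \<in> F i" using x decseq_SucD[OF assms, of i] by blast
  qed
qed auto

lemma pre_rel_nu_pre_rel:
  assumes "compact (rel_graph R)" "\<And>i. closed ((pre_rel E R ^^ i) E)"
  shows "pre_rel E R (nu_pre_rel E R) = nu_pre_rel E R"
proof -
  have "pre_rel E R (nu_pre_rel E R) = (\<Inter>i. (pre_rel E R ^^ Suc i) E)"
    unfolding nu_pre_rel_def using pre_rel_INT_decseq[OF assms(1) decseq_pre_rel_iterates assms(2)] by simp
  also have "\<dots> = nu_pre_rel E R"
    unfolding nu_pre_rel_def by (rule INT_Suc_decseq[OF decseq_pre_rel_iterates])
  finally show ?thesis .
qed

lemma nu_pre_rel_eq_chain_starts:
  assumes "pre_rel E R (nu_pre_rel E R) = nu_pre_rel E R" "rel_graph R \<subseteq> E \<times> E"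
  shows "nu_pre_rel E R = {w0 \<in> E. \<exists>f. f 0 = w0 \<and> (\<forall>k. R (f k) (f (Suc k)))}"
    (is "_ = ?S")
proof
  show "nu_pre_rel E R \<subseteq> ?S"
  proof
    fix w0 assume w0: "w0 \<in> nu_pre_rel E R"
    have "\<forall>w\<in>nu_pre_rel E R. \<exists>w'. w' \<in> nu_pre_rel E R \<and> R w w'"
      using assms(1) unfolding pre_rel_def by blast
    then obtain g where g: "\<And>w. w \<in> nu_pre_rel E R \<Longrightarrow> g w \<in> nu_pre_rel E R \<and> R w (g w)"
      by metis
    have chain: "(g ^^ k) w0 \<in> nu_pre_rel E R" for k
      by (induction k) (simp_all add: w0 g)
    have "R ((g ^^ k) w0) ((g ^^ Suc k) w0)" for k
      using g[OF chain] by simp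
    moreover have "w0 \<in> E" using w0 nu_pre_rel_subset by blast
    ultimately show "w0 \<in> ?S" by (auto intro!: exI[of _ "\<lambda>k. (g ^^ k) w0"])
  qed
next
  show "?S \<subseteq> nu_pre_rel E R"
  proof (rule subset_nu_pre_rel)
    show "\<forall>w0\<in>?S. \<exists>w1\<in>?S. R w0 w1"
    proof
      fix w0 assume "w0 \<in> ?S"
      then obtain f where f: "f 0 = w0" "\<forall>k. R (f k) (f (Suc k))" by blast
      have "(f 0, f (Suc 0)) \<in> rel_graph R" using f(2) by simp
      then have "f (Suc 0) \<in> E" using assms(2) by blast
      then have "f (Suc 0) \<in> ?S" using f(2) by (auto intro!: exI[of _ "\<lambda>k. f (Suc k)"])
      then show "\<exists>w1\<in>?S. R w0 w1" using f by auto
    qed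
  qed auto
qed

theorem mainTheorem3:
  fixes ps :: "('s, 'c::finite) etp list" and a b :: real
  assumes "a \<in> \<rat>" and "b \<in> \<rat>"
    and "ps \<noteq> []" and "\<forall>p\<in>set ps. wf_etp p"
  shows
   "let E = {a..b}; R = erel_seq E ps; N = (\<Inter>i. (pre_rel E R ^^ i) E) in
     (\<forall>I\<in>closed_subints E. pre_rel E R I \<in> closed_subints E) \<and>
     N \<in> closed_subints E \<and>
     pre_rel E R N = N \<and>
     (\<forall>I\<in>closed_subints E. pre_rel E R I = I \<longrightarrow> I \<subseteq> N) \<and>
     (\<forall>w0\<in>N. \<exists>w1\<in>N. R w0 w1) \<and>
     (\<forall>S. S \<subseteq> E \<and> (\<forall>w0\<in>S. \<exists>w1\<in>S. R w0 w1) \<longrightarrow> S \<subseteq> N) \<and>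
     (is_cycle ps \<longrightarrow>
        N = {w0 \<in> E. \<exists>f :: nat \<Rightarrow> real. f 0 = w0 \<and> (\<forall>k. R (f k) (f (Suc k)))})"
proof -
  define E where "E = {a..b}"
  define R where "R = erel_seq E ps"
  have graph: "compact (rel_graph R)" "convex (rel_graph R)" "rel_graph R \<subseteq> E \<times> E"
    unfolding R_def E_def using rel_graph_erel_seq[OF assms(3)] by blast+
  have pre: "pre_rel E R I \<in> closed_subints E" if "I \<in> closed_subints E" for I
    using graph that by (intro pre_rel_closed_subints) auto
  have iterates: "(pre_rel E R ^^ i) E \<in> closed_subints E" for i
    by (rule pre_rel_iterates_closed_subints[OF _ pre]) (auto simp: E_def closed_subints_def)
  have nu: "nu_pre_rel E R \<in> closed_subints E"
    unfolding nu_pre_rel_def by (rule closed_subints_INT[OF iterates])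
  have fixpoint: "pre_rel E R (nu_pre_rel E R) = nu_pre_rel E R"
    using iterates by (intro pre_rel_nu_pre_rel graph(1) compact_imp_closed)
      (auto simp: closed_subints_iff_compact_convex)
  have successor: "\<forall>w0\<in>I. \<exists>w1\<in>I. R w0 w1" if "pre_rel E R I = I" for I
    using that unfolding pre_rel_def by blast
  show ?thesis
    unfolding Let_def E_def[symmetric] R_def[symmetric] nu_pre_rel_def[symmetric]
  proof (intro conjI ballI allI impI)
    show "I \<subseteq> nu_pre_rel E R" if "I \<in> closed_subints E" "pre_rel E R I = I" for I
      using that successor unfolding closed_subints_def by (intro subset_nu_pre_rel) auto
    show "S \<subseteq> nu_pre_rel E R" if "S \<subseteq> E \<and> (\<forall>w0\<in>S. \<exists>w1\<in>S. R w0 w1)" for S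
      using that by (intro subset_nu_pre_rel) auto
  qed (use pre nu fixpoint successor[OF fixpoint] nu_pre_rel_eq_chain_starts[OF fixpoint graph(3)] in auto)
qed

end
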